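(* (i) Let $p_{1}, p_{2}, m, r \in \mathbb N$. Then \begin{align*} T(p_{1},p_{2},m,1,r,0) &=\sum_{i=2}^{m}\frac{(-1)^{m-i}}{r^{m-i+1}}S_{p_{1},p_{2},i}^{+,+,+} +\frac{(-1)^{m-1}}{r^{m}}\left(S_{p_{1},p_{2}+1}^{+,+}+S_{p_{2},p_{1}+1}^{+,+}\right) -\frac{(-1)^{m-1}}{r^{m}}\zeta(p_{1}+p_{2}+1)\\ &\quad +\frac{(-1)^{m-1}}{r^{m}}\sum_{b=1}^{r-1}S(p_{1},p_{2},1,b,0) +\frac{(-1)^{m-1}}{r^{m}}\left(\sum_{b=1}^{r-1}S(p_{2},p_{1},1,b,0) -\sum_{b=1}^{r-1}S(0,p_{1}+p_{2}+1,1,b,0)\right). \end{align*} (ii) Let $p_{1}, m, r \in \mathbb N$, $p_{2} \in \mathbb N_{0}$ with $m \geq p_{2}+2$. Then \begin{align*} T(p_{1},-p_{2},m,1,r,0)=\frac{1}{p_{2}+1}\sum_{\ell=0}^{p_{2}} \binom{p_{2}+1}{\ell}B_{\ell}^{+}S(p_{1},m-p_{2}-1+\ell,1,r,0)\,. \end{align*} (iii) Let $m, r \in \mathbb N$, $p_{1}, p_{2} \in \mathbb N_{0}$ with $m \geq p_{1}+p_{2}+3$. Then \begin{align*} T(-p_{1},-p_{2},m,1,r,0)=\frac{1}{(p_{1}+1)(p_{2}+1)}\sum_{\ell_{1}=0}^{p_{1}} \sum_{\ell_{2}=0}^{p_{2}} \binom{p_{1}+1}{\ell_{1}}\binom{p_{2}+1}{\ell_{2}}B_{\ell_{1}}^{+}B_{\ell_{2}}^{+}\,S(0,m-p_{1}-p_{2}-1+\ell_{1}+\ell_{2},1,r,0)\,.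 \end{align*}
   Context: $H_n^{(q)}=\sum_{j=1}^n j^{-q}$ for $q\in\mathbb N$; for an integer $q\ge0$, $H_n^{(-q)}=\sum_{\ell=1}^n\ell^q$ (so $H_n^{(0)}=n$). For $q,q_1,q_2\in\mathbb Z$ and $m,t,r\in\mathbb N$: $S(q,m,t,r,0):=\sum_{n=1}^\infty\frac{H_n^{(q)}}{n^{m}(n+r)^{t}}$ and $T(q_{1},q_{2},m,t,r,0):=\sum_{n=1}^\infty\frac{H_n^{(q_{1})}H_n^{(q_{2})}}{n^{m}(n+r)^{t}}$. $S_{p,q}^{+,+}:=\sum_{n\ge1} H_n^{(p)}/n^q$ and $S_{p_1,p_2,q}^{+,+,+}:=\sum_{n\ge1} H_n^{(p_1)}H_n^{(p_2)}/n^q$. Bernoulli numbers $B_j^{+}$: $\frac{x}{1-e^{-x}}=\sum_{j\ge0}B_j^{+}\frac{x^j}{j!}$. Empty sums are $0$. *)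

theory Defs
  imports "HOL-Analysis.Analysis" "HOL-Computational_Algebra.Formal_Power_Series"
begin

definition harm :: "int \<Rightarrow> nat \<Rightarrow> real" where
  "harm q n = (if q \<ge> 0 then (\<Sum>j=1..n. 1 / real j ^ nat q)
               else (\<Sum>l=1..n. real l ^ nat (-q)))"

definition S :: "int \<Rightarrow> nat \<Rightarrow> nat \<Rightarrow> nat \<Rightarrow> real" where
  "S q m t r = (\<Sum>n. harm q (Suc n) / (real (Suc n) ^ m * real (Suc n + r) ^ t))"

definition T :: "int \<Rightarrow> int \<Rightarrow> nat \<Rightarrow> nat \<Rightarrow> nat \<Rightarrow> real" where
  "T q1 q2 m t r = (\<Sum>n. harm q1 (Suc n) * harm q2 (Suc n) /
                          (real (Suc n) ^ m * real (Suc n + r) ^ t))"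

definition Spp :: "nat \<Rightarrow> nat \<Rightarrow> real" where
  "Spp p q = (\<Sum>n. harm (int p) (Suc n) / real (Suc n) ^ q)"

definition Sppp :: "nat \<Rightarrow> nat \<Rightarrow> nat \<Rightarrow> real" where
  "Sppp p1 p2 q = (\<Sum>n. harm (int p1) (Suc n) * harm (int p2) (Suc n) / real (Suc n) ^ q)"

definition zeta_nat :: "nat \<Rightarrow> real" where
  "zeta_nat s = (\<Sum>n. 1 / real (Suc n) ^ s)"

definition bernoulli_plus :: "nat \<Rightarrow> real" where
  "bernoulli_plus j = fact j * fps_nth (fps_X / (1 - fps_exp (-1 :: real))) j"

end

(*
  Each identity comes from expanding the summand of T into finitely many pieces whose series
  are known, and summing termwise.

  In (ii) and (iii), Faulhaber's formula
    H_n^(-p) = 1/(p+1) sum_l binom(p+1,l) B_l^+ n^(p+1-l),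
  read off from the coefficient of x^(p+1) in (e^(nx) - 1) x/(1 - e^(-x)) = x (e^x + ... + e^(nx)),
  turns each factor H_n^(-p) into powers of n.

  In (i), partial fractions give
    1/(n^m (n+r)) = sum_{i=2..m} (-1)^(m-i) r^(i-m-1) n^(-i)
                    + (-1)^(m-1) r^(-m) sum_{k<r} 1/((n+k)(n+k+1)),
  and summation by parts against 1/(n+k) turns sum_n H_n^(p1) H_n^(p2) / ((n+k)(n+k+1)) into
  S(p1,p2,1,k) + S(p2,p1,1,k) - S(0,p1+p2+1,1,k), since the increments of H^(p1) H^(p2) are
  H_n^(p1)/n^p2 + H_n^(p2)/n^p1 - 1/n^(p1+p2). The term k = 0 yields the linear sums and zeta.

  Convergence throughout rests on H_n^(q) <= 1 + ln n for q >= 1.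
*)

theory Submission
  imports Defs "HOL-Real_Asymp.Real_Asymp"
begin

lemma fps_X_div_one_minus_exp_neg_one:
  "fps_X / (1 - fps_exp (-1 :: real)) * (1 - fps_exp (-1)) = fps_X"
proof (rule fps_times_divide_eq)
  have "fps_nth (1 - fps_exp (-1 :: real)) 1 \<noteq> 0" by simp
  then show "1 - fps_exp (-1 :: real) \<noteq> 0" by auto
  show "subdegree (1 - fps_exp (-1 :: real)) \<le> subdegree (fps_X :: real fps)"
    by (rule subdegree_leI) simp
qed

lemma sum_fps_exp_mult_one_minus_exp_neg_one:
  "(\<Sum>k=1..n. fps_exp (real k)) * (1 - fps_exp (-1)) = fps_exp (real n) - 1"
proof (induction n)
  case (Suc n)
  have "fps_exp (real (Suc n)) * fps_exp (-1) = fps_exp (real n)"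
    by (simp add: fps_exp_add_mult[symmetric])
  with Suc show ?case by (simp add: algebra_simps)
qed simp

lemma sum_powers_bernoulli_plus:
  "(\<Sum>l=1..n. real l ^ p) = 1 / real (p + 1) *
     (\<Sum>j=0..p. real ((p + 1) choose j) * bernoulli_plus j * real n ^ (p + 1 - j))"
proof -
  define G where "G = fps_X / (1 - fps_exp (-1 :: real))"
  have "G * (fps_exp (real n) - 1) = (\<Sum>k=1..n. fps_exp (real k)) * (G * (1 - fps_exp (-1)))"
    by (simp only: sum_fps_exp_mult_one_minus_exp_neg_one[symmetric] ac_simps)
  also have "\<dots> = (\<Sum>k=1..n. fps_exp (real k)) * fps_X"
    unfolding G_def fps_X_div_one_minus_exp_neg_one ..
  finally have "fps_nth (G * (fps_exp (real n) - 1)) (Suc p) = (\<Sum>k=1..n. real k ^ p / fact p)"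
    by (simp add: fps_sum_nth)
  then have coeff: "(\<Sum>j=0..p. bernoulli_plus j / fact j * (real n ^ (Suc p - j) / fact (Suc p - j)))
      = (\<Sum>k=1..n. real k ^ p) / fact p"
    by (simp add: fps_mult_nth Suc_diff_le G_def bernoulli_plus_def sum_divide_distrib)
  have summand: "bernoulli_plus j / fact j * (real n ^ (Suc p - j) / fact (Suc p - j)) =
      1 / fact (Suc p) * (real (Suc p choose j) * bernoulli_plus j * real n ^ (Suc p - j))"
    if "j \<in> {0..p}" for j
    using that by (simp add: binomial_fact del: fact_Suc)
  have "(\<Sum>k=1..n. real k ^ p) / fact p = 1 / fact (Suc p) *
      (\<Sum>j=0..p. real (Suc p choose j) * bernoulli_plus j * real n ^ (Suc p - j))"
    unfolding coeff[symmetric] sum_distrib_left using summand by (rule sum.cong[OF refl])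
  then show ?thesis
    by (simp add: field_simps del: of_nat_Suc)
qed

lemma harm_nonneg: "q \<ge> 0 \<Longrightarrow> 0 \<le> harm q n"
  unfolding harm_def by (auto intro: sum_nonneg)

lemma harm_Suc: "q \<ge> 0 \<Longrightarrow> harm q (Suc n) = harm q n + 1 / real (Suc n) ^ nat q"
  unfolding harm_def by simp

lemma harm_zero [simp]: "harm 0 n = real n"
  unfolding harm_def by simp

lemma harm_neg: "harm (- int p) n = (\<Sum>l=1..n. real l ^ p)"
  unfolding harm_def by (cases "p = 0") auto

lemma harm_one_le_one_plus_ln: "harm 1 n \<le> 1 + ln (real n)"
proof (induction n)
  case (Suc n)
  show ?case
  proof (cases "n = 0")
    case False
    have "ln (real n / real (Suc n)) \<le> real n / real (Suc n) - 1"
      using False by (intro ln_le_minus_one) auto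
    then have "1 / real (Suc n) \<le> ln (real (Suc n)) - ln (real n)"
      using False by (simp add: ln_div field_simps)
    then show ?thesis using Suc.IH harm_Suc[of 1 n] by simp
  qed (simp add: harm_def)
qed (simp add: harm_def)

lemma harm_le_harm_one: "q \<ge> 1 \<Longrightarrow> harm q n \<le> harm 1 n"
  unfolding harm_def
  by (auto intro!: sum_mono divide_left_mono order.trans[OF _ power_increasing[of 1 "nat q"]])

lemma harm_le_one_plus_ln: "q \<ge> 1 \<Longrightarrow> harm q n \<le> 1 + ln (real n)"
  using harm_le_harm_one harm_one_le_one_plus_ln order.trans by blast

lemma ln_of_nat_nonneg: "0 \<le> ln (real n)"
  by (cases "n = 0") auto

lemma harm_le_one_plus_ln_sq: "q \<ge> 1 \<Longrightarrow> harm q n \<le> (1 + ln (real n))^2"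
proof -
  assume "q \<ge> 1"
  then have "harm q n \<le> (1 + ln (real n)) ^ 1" by (simp add: harm_le_one_plus_ln)
  also have "\<dots> \<le> (1 + ln (real n))^2"
    by (rule power_increasing) (simp_all add: ln_of_nat_nonneg)
  finally show ?thesis .
qed

lemma harm_mult_harm_le_one_plus_ln_sq:
  "q1 \<ge> 1 \<Longrightarrow> q2 \<ge> 1 \<Longrightarrow> harm q1 n * harm q2 n \<le> (1 + ln (real n))^2"
  unfolding power2_eq_square
  using ln_of_nat_nonneg[of n]
  by (intro mult_mono harm_le_one_plus_ln harm_nonneg) auto

lemma summable_div_if_le_one_plus_ln_sq:
  fixes a d :: "nat \<Rightarrow> real"
  assumes "\<And>n. 0 \<le> a n" "\<And>n. a n \<le> (1 + ln (real (Suc n)))^2" "\<And>n. real (Suc n)^2 \<le> d n"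
  shows "summable (\<lambda>n. a n / d n)"
proof (rule summable_comparison_test_bigo)
  have "summable (\<lambda>n. (1 + ln (real (Suc n)))^2 / real (Suc n)^2)"
  proof (rule summable_comparison_test_bigo)
    show "summable (\<lambda>n. norm (real n powr (-3/2)))"
      using summable_real_powr_iff[of "-3/2"] by simp
    show "(\<lambda>n. (1 + ln (real (Suc n)))^2 / real (Suc n)^2) \<in> O(\<lambda>n. real n powr (-3/2))"
      by real_asymp
  qed
  then show "summable (\<lambda>n. norm ((1 + ln (real (Suc n)))^2 / real (Suc n)^2))"
    by simp
  have "norm (a n / d n) \<le> 1 * norm ((1 + ln (real (Suc n)))^2 / real (Suc n)^2)" for n
    using assms[of n] by (simp add: frac_le)
  then show "(\<lambda>n. a n / d n) \<in> O(\<lambda>n. (1 + ln (real (Suc n)))^2 / real (Suc n)^2)"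
    by (intro bigoI always_eventually allI)
qed

lemma real_Suc_power_le_power_mult_power:
  "k \<le> e + t \<Longrightarrow> real (Suc n) ^ k \<le> real (Suc n) ^ e * real (Suc n + b) ^ t"
proof -
  assume "k \<le> e + t"
  then have "real (Suc n) ^ k \<le> real (Suc n) ^ e * real (Suc n) ^ t"
    by (simp add: power_add[symmetric] power_increasing)
  also have "\<dots> \<le> real (Suc n) ^ e * real (Suc n + b) ^ t"
    by (intro mult_left_mono power_mono) auto
  finally show ?thesis .
qed

lemma summable_S:
  "q \<ge> 1 \<Longrightarrow> e + t \<ge> 2 \<Longrightarrow>
    summable (\<lambda>n. harm q (Suc n) / (real (Suc n) ^ e * real (Suc n + b) ^ t))"
  by (intro summable_div_if_le_one_plus_ln_sq harm_nonneg harm_le_one_plus_ln_sq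
      real_Suc_power_le_power_mult_power) auto

lemma summable_S_zero:
  assumes "e + t \<ge> 3"
  shows "summable (\<lambda>n. harm 0 (Suc n) / (real (Suc n) ^ e * real (Suc n + b) ^ t))"
proof -
  have "real (Suc n)^2 \<le> real (Suc n) ^ e * real (Suc n + b) ^ t / real (Suc n)" for n
    using real_Suc_power_le_power_mult_power[of 3 e t n b] assms
    by (simp add: field_simps power_numeral_reduce)
  then have "summable (\<lambda>n. 1 / (real (Suc n) ^ e * real (Suc n + b) ^ t / real (Suc n)))"
    by (intro summable_div_if_le_one_plus_ln_sq) (auto intro: one_le_power)
  then show ?thesis by simp
qed

lemma summable_harm_mult_harm_div:
  "q1 \<ge> 1 \<Longrightarrow> q2 \<ge> 1 \<Longrightarrow> (\<And>n. real (Suc n)^2 \<le> d n) \<Longrightarrow>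
    summable (\<lambda>n. harm q1 (Suc n) * harm q2 (Suc n) / d n)"
  by (intro summable_div_if_le_one_plus_ln_sq mult_nonneg_nonneg harm_nonneg
      harm_mult_harm_le_one_plus_ln_sq) auto

lemma sums_mult_harm_neg:
  fixes f w :: "nat \<Rightarrow> real"
  assumes "m \<ge> p + 1"
    and summable: "\<And>l. l \<le> p \<Longrightarrow> summable (\<lambda>n. f n / (real (Suc n) ^ (m - p - 1 + l) * w n))"
  shows "(\<lambda>n. f n * harm (- int p) (Suc n) / (real (Suc n) ^ m * w n)) sums
    (1 / real (p + 1) * (\<Sum>l=0..p. real ((p + 1) choose l) * bernoulli_plus l *
       (\<Sum>n. f n / (real (Suc n) ^ (m - p - 1 + l) * w n))))"
proof -
  define c where "c l = real ((p + 1) choose l) * bernoulli_plus l" for l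
  define g where "g l n = f n / (real (Suc n) ^ (m - p - 1 + l) * w n)" for l n
  have shift: "real (Suc n) ^ (p + 1 - l) / (real (Suc n) ^ m * w n) =
      1 / (real (Suc n) ^ (m - p - 1 + l) * w n)" if "l \<le> p" for l n
  proof -
    have "m = (m - p - 1 + l) + (p + 1 - l)" using that assms(1) by simp
    then have "real (Suc n) ^ m = real (Suc n) ^ (m - p - 1 + l) * real (Suc n) ^ (p + 1 - l)"
      by (metis power_add)
    then show ?thesis by simp
  qed
  have "f n * harm (- int p) (Suc n) / (real (Suc n) ^ m * w n) =
      1 / real (p + 1) * (\<Sum>l=0..p. c l * g l n)" for n
  proof -
    have "f n * harm (- int p) (Suc n) / (real (Suc n) ^ m * w n) = 1 / real (p + 1) *
        (\<Sum>l=0..p. c l * (f n * (real (Suc n) ^ (p + 1 - l) / (real (Suc n) ^ m * w n))))"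
      unfolding harm_neg sum_powers_bernoulli_plus c_def
      by (simp add: sum_distrib_left sum_divide_distrib mult_ac)
    also have "\<dots> = 1 / real (p + 1) * (\<Sum>l=0..p. c l * g l n)"
      unfolding g_def using shift by (intro arg_cong2[where f = "(*)"] sum.cong) auto
    finally show ?thesis .
  qed
  moreover have "(\<lambda>n. 1 / real (p + 1) * (\<Sum>l=0..p. c l * g l n)) sums
      (1 / real (p + 1) * (\<Sum>l=0..p. c l * suminf (g l)))"
    using summable unfolding g_def
    by (intro sums_mult sums_sum summable_sums summable_mult) auto
  ultimately show ?thesis by (simp add: c_def g_def[abs_def])
qed

lemma T_pos_neg:
  assumes "p1 \<ge> 1" "m \<ge> p2 + 2"
  shows "T (int p1) (- int p2) m 1 r =
    1 / real (p2 + 1) * (\<Sum>l=0..p2. real ((p2 + 1) choose l) * bernoulli_plus l *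
                                      S (int p1) (m - p2 - 1 + l) 1 r)"
proof -
  have "(\<lambda>n. harm (int p1) (Suc n) * harm (- int p2) (Suc n) /
      (real (Suc n) ^ m * real (Suc n + r) ^ 1)) sums
    (1 / real (p2 + 1) * (\<Sum>l=0..p2. real ((p2 + 1) choose l) * bernoulli_plus l *
                                      S (int p1) (m - p2 - 1 + l) 1 r))"
    unfolding S_def using assms by (intro sums_mult_harm_neg summable_S) auto
  then show ?thesis unfolding T_def by (rule sums_unique[symmetric])
qed

lemma T_neg_neg:
  assumes "m \<ge> p1 + p2 + 3"
  shows "T (- int p1) (- int p2) m 1 r =
    1 / (real (p1 + 1) * real (p2 + 1)) *
      (\<Sum>l1=0..p1. \<Sum>l2=0..p2. real ((p1 + 1) choose l1) * real ((p2 + 1) choose l2) *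
           bernoulli_plus l1 * bernoulli_plus l2 * S 0 (m - p1 - p2 - 1 + l1 + l2) 1 r)"
proof -
  define c where "c p l = real ((p + 1) choose l) * bernoulli_plus l" for p l
  \<comment> \<open>Writing H_n^(-p1) / n^k as H_n^(0) H_n^(-p1) / n^(k+1) lets the Faulhaber
    expansion act on the second factor too.\<close>
  have inner: "(\<lambda>n. harm (- int p1) (Suc n) / (real (Suc n) ^ k * real (Suc n + r) ^ 1)) sums
      (1 / real (p1 + 1) * (\<Sum>l1=0..p1. c p1 l1 * S 0 (k - p1 + l1) 1 r))"
    if "k \<ge> p1 + 2" for k
  proof -
    have "(\<lambda>n. harm 0 (Suc n) * harm (- int p1) (Suc n) /
        (real (Suc n) ^ Suc k * real (Suc n + r) ^ 1)) sums
      (1 / real (p1 + 1) * (\<Sum>l1=0..p1. c p1 l1 * S 0 (Suc k - p1 - 1 + l1) 1 r))"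
      unfolding S_def c_def using that by (intro sums_mult_harm_neg summable_S_zero) auto
    moreover have "Suc k - p1 - 1 + l1 = k - p1 + l1" for l1
      using that by simp
    ultimately show ?thesis by (simp del: of_nat_Suc)
  qed
  have "(\<lambda>n. harm (- int p1) (Suc n) * harm (- int p2) (Suc n) /
      (real (Suc n) ^ m * real (Suc n + r) ^ 1)) sums
    (1 / real (p2 + 1) * (\<Sum>l2=0..p2. c p2 l2 *
      (\<Sum>n. harm (- int p1) (Suc n) / (real (Suc n) ^ (m - p2 - 1 + l2) * real (Suc n + r) ^ 1))))"
    unfolding c_def using assms by (intro sums_mult_harm_neg sums_summable[OF inner]) auto
  also have "(\<Sum>l2=0..p2. c p2 l2 *
      (\<Sum>n. harm (- int p1) (Suc n) / (real (Suc n) ^ (m - p2 - 1 + l2) * real (Suc n + r) ^ 1))) =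
    (\<Sum>l2=0..p2. c p2 l2 * (1 / real (p1 + 1) *
      (\<Sum>l1=0..p1. c p1 l1 * S 0 (m - p1 - p2 - 1 + l1 + l2) 1 r)))"
  proof (intro sum.cong refl arg_cong2[where f = "(*)"])
    fix l2 assume "l2 \<in> {0..p2}"
    with assms have "(\<Sum>n. harm (- int p1) (Suc n) /
        (real (Suc n) ^ (m - p2 - 1 + l2) * real (Suc n + r) ^ 1)) =
      1 / real (p1 + 1) * (\<Sum>l1=0..p1. c p1 l1 * S 0 (m - p2 - 1 + l2 - p1 + l1) 1 r)"
      by (intro sums_unique[symmetric] inner) auto
    also have "\<dots> = 1 / real (p1 + 1) * (\<Sum>l1=0..p1. c p1 l1 * S 0 (m - p1 - p2 - 1 + l1 + l2) 1 r)"
      using assms by (intro sum.cong refl arg_cong2[where f = "(*)"]) (auto simp: algebra_simps)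
    finally show "(\<Sum>n. harm (- int p1) (Suc n) /
        (real (Suc n) ^ (m - p2 - 1 + l2) * real (Suc n + r) ^ 1)) =
      1 / real (p1 + 1) * (\<Sum>l1=0..p1. c p1 l1 * S 0 (m - p1 - p2 - 1 + l1 + l2) 1 r)" .
  qed
  finally show ?thesis
    unfolding T_def c_def
    by (simp add: sums_iff sum_distrib_left sum.swap[of _ "{0..p1}"] mult_ac)
qed

lemma one_div_power_mult_add_partial_fractions:
  fixes x r :: real
  assumes "x \<noteq> 0" "r \<noteq> 0" "x + r \<noteq> 0"
  shows "1 / (x ^ m * (x + r)) =
    (\<Sum>i=1..m. (-1) ^ (m - i) / r ^ (m - i + 1) * (1 / x ^ i)) + (-1) ^ m / r ^ m * (1 / (x + r))"
proof (induction m)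
  case (Suc m)
  have "(\<Sum>i=1..Suc m. (-1) ^ (Suc m - i) / r ^ (Suc m - i + 1) * (1 / x ^ i)) =
      (-1) ^ m / r ^ Suc m * (1 / x) + (\<Sum>i<m. (-1) ^ (m - Suc i) / r ^ (m - Suc i + 1) * (1 / x ^ Suc (Suc i)))"
    unfolding sum.atLeast1_atMost_eq[folded One_nat_def] sum.lessThan_Suc_shift by simp
  also have "\<dots> = (-1) ^ m / r ^ Suc m * (1 / x) +
      1 / x * (\<Sum>i=1..m. (-1) ^ (m - i) / r ^ (m - i + 1) * (1 / x ^ i))"
    unfolding sum.atLeast1_atMost_eq[folded One_nat_def] sum_distrib_left by (simp add: mult_ac)
  finally have split: "(\<Sum>i=1..Suc m. (-1) ^ (Suc m - i) / r ^ (Suc m - i + 1) * (1 / x ^ i)) = \<dots>" .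
  have "1 / (x ^ Suc m * (x + r)) = 1 / x * (1 / (x ^ m * (x + r)))"
    by simp
  also have "\<dots> = 1 / x * (\<Sum>i=1..m. (-1) ^ (m - i) / r ^ (m - i + 1) * (1 / x ^ i)) +
      (-1) ^ m / r ^ m * (1 / (x * (x + r)))"
    unfolding Suc.IH by (simp add: algebra_simps)
  also have "1 / (x * (x + r)) = 1 / r * (1 / x - 1 / (x + r))"
    using assms by (simp add: field_simps)
  finally show ?case
    unfolding split by (simp add: algebra_simps)
qed simp

lemma sum_one_div_consecutive:
  fixes x :: real
  assumes "x > 0"
  shows "(\<Sum>k<r. 1 / ((x + real k) * (x + real k + 1))) = 1 / x - 1 / (x + real r)"
proof (induction r)
  case (Suc r)
  have "1 / ((x + real r) * (x + real r + 1)) = 1 / (x + real r) - 1 / (x + real r + 1)"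
    using assms by (simp add: field_simps)
  with Suc show ?case by (simp add: algebra_simps)
qed simp

lemma one_div_power_mult_add_consecutive:
  fixes x :: real
  assumes "x > 0" "r \<ge> 1" "m \<ge> 1"
  shows "1 / (x ^ m * (x + real r)) =
    (\<Sum>i=2..m. (-1) ^ (m - i) / real r ^ (m - i + 1) * (1 / x ^ i)) +
    (-1) ^ (m - 1) / real r ^ m * (\<Sum>k<r. 1 / ((x + real k) * (x + real k + 1)))"
proof -
  obtain j where m: "m = Suc j" using assms(3) by (cases m) auto
  define d where "d = (-1) ^ (m - 1) / real r ^ m"
  have "{1..m} = insert 1 {2..m}" using m by auto
  then have "(\<Sum>i=1..m. (-1) ^ (m - i) / real r ^ (m - i + 1) * (1 / x ^ i)) =
      d * (1 / x) + (\<Sum>i=2..m. (-1) ^ (m - i) / real r ^ (m - i + 1) * (1 / x ^ i))"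
    unfolding d_def using m by simp
  moreover have "(-1) ^ m / real r ^ m = - d"
    unfolding d_def using m by simp
  moreover have "1 / (x ^ m * (x + real r)) =
      (\<Sum>i=1..m. (-1) ^ (m - i) / real r ^ (m - i + 1) * (1 / x ^ i)) +
      (-1) ^ m / real r ^ m * (1 / (x + real r))"
    using assms by (intro one_div_power_mult_add_partial_fractions) auto
  ultimately have "1 / (x ^ m * (x + real r)) =
      (\<Sum>i=2..m. (-1) ^ (m - i) / real r ^ (m - i + 1) * (1 / x ^ i)) + d * (1 / x - 1 / (x + real r))"
    by (simp only:) (simp add: algebra_simps)
  then show ?thesis
    unfolding sum_one_div_consecutive[OF assms(1)] d_def .
qed

lemma sums_summation_by_parts_inverse:
  fixes a :: "nat \<Rightarrow> real"
  assumes "a 0 = 0" and lim: "(\<lambda>n. a n / real (n + k + 1)) \<longlonglongrightarrow> 0"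
    and summable: "summable (\<lambda>n. a (Suc n) / (real (Suc n + k) * real (Suc n + k + 1)))"
  shows "(\<lambda>n. (a (Suc n) - a n) / real (Suc n + k)) sums
    (\<Sum>n. a (Suc n) / (real (Suc n + k) * real (Suc n + k + 1)))"
proof -
  define h where "h n = a n / real (n + k + 1)" for n
  have "(a (Suc n) - a n) / real (Suc n + k) =
      a (Suc n) / (real (Suc n + k) * real (Suc n + k + 1)) + (h (Suc n) - h n)" for n
  proof -
    have "(y - z) / A = y / (A * (A + 1)) + (y / (A + 1) - z / A)" if "A > 0" for A y z :: real
      using that by (simp add: divide_simps) (simp add: algebra_simps)
    from this[of "real (Suc n + k)"] show ?thesis
      unfolding h_def by (simp add: add_ac)
  qed
  moreover have "(\<lambda>n. h (Suc n) - h n) sums 0"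
    using telescope_sums[OF lim[folded h_def]] assms(1) by (simp add: h_def)
  ultimately show ?thesis
    using sums_add[OF summable_sums[OF summable]] by fastforce
qed

lemma harm_mult_harm_Suc_diff:
  "harm (int p1) (Suc n) * harm (int p2) (Suc n) - harm (int p1) n * harm (int p2) n =
    harm (int p1) (Suc n) / real (Suc n) ^ p2 + harm (int p2) (Suc n) / real (Suc n) ^ p1 -
    1 / real (Suc n) ^ (p1 + p2)"
  by (simp add: harm_Suc power_add field_simps del: of_nat_Suc)

lemma suminf_harm_mult_harm_div_consecutive:
  assumes "p1 \<ge> 1" "p2 \<ge> 1"
  shows "(\<Sum>n. harm (int p1) (Suc n) * harm (int p2) (Suc n) /
      (real (Suc n + k) * real (Suc n + k + 1))) =
    S (int p1) p2 1 k + S (int p2) p1 1 k - S 0 (p1 + p2 + 1) 1 k"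
proof -
  define a where "a n = harm (int p1) n * harm (int p2) n" for n
  have bound: "0 \<le> a n" "a n \<le> (1 + ln (real n))^2" for n
    unfolding a_def using assms
    by (auto intro!: mult_nonneg_nonneg harm_nonneg harm_mult_harm_le_one_plus_ln_sq)
  have "(\<lambda>n. a n / real (n + k + 1)) \<longlonglongrightarrow> 0"
  proof (rule tendsto_sandwich[OF _ _ tendsto_const])
    show "\<forall>\<^sub>F n in sequentially. 0 \<le> a n / real (n + k + 1)"
      using bound by simp
    show "\<forall>\<^sub>F n in sequentially. a n / real (n + k + 1) \<le> (1 + ln (real n))^2 / (real n + 1)"
      using bound by (intro always_eventually allI frac_le) auto
    show "(\<lambda>n. (1 + ln (real n))^2 / (real n + 1)) \<longlonglongrightarrow> 0"
      by real_asymp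
  qed
  moreover have "summable (\<lambda>n. a (Suc n) / (real (Suc n + k) * real (Suc n + k + 1)))"
    unfolding a_def using assms
    by (intro summable_harm_mult_harm_div) (auto simp: power2_eq_square intro: mult_mono)
  moreover have "a 0 = 0"
    unfolding a_def harm_def by simp
  ultimately have "(\<lambda>n. (a (Suc n) - a n) / real (Suc n + k)) sums
      (\<Sum>n. a (Suc n) / (real (Suc n + k) * real (Suc n + k + 1)))"
    by (rule sums_summation_by_parts_inverse[rotated])
  moreover have "(a (Suc n) - a n) / real (Suc n + k) =
      harm (int p1) (Suc n) / (real (Suc n) ^ p2 * real (Suc n + k) ^ 1) +
      harm (int p2) (Suc n) / (real (Suc n) ^ p1 * real (Suc n + k) ^ 1) -
      harm 0 (Suc n) / (real (Suc n) ^ (p1 + p2 + 1) * real (Suc n + k) ^ 1)" for n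
  proof -
    have "harm 0 (Suc n) / (real (Suc n) ^ (p1 + p2 + 1) * real (Suc n + k) ^ 1) =
        1 / real (Suc n) ^ (p1 + p2) / real (Suc n + k)"
      by (simp del: of_nat_Suc)
    then show ?thesis
      unfolding a_def harm_mult_harm_Suc_diff by (simp add: diff_divide_distrib add_divide_distrib)
  qed
  moreover have "(\<lambda>n. harm (int p1) (Suc n) / (real (Suc n) ^ p2 * real (Suc n + k) ^ 1) +
      harm (int p2) (Suc n) / (real (Suc n) ^ p1 * real (Suc n + k) ^ 1) -
      harm 0 (Suc n) / (real (Suc n) ^ (p1 + p2 + 1) * real (Suc n + k) ^ 1)) sums
    (S (int p1) p2 1 k + S (int p2) p1 1 k - S 0 (p1 + p2 + 1) 1 k)"
    unfolding S_def using assms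
    by (intro sums_diff sums_add summable_sums summable_S summable_S_zero) auto
  ultimately show ?thesis
    unfolding a_def using sums_unique2 by fastforce
qed

lemma S_one_zero_eq_Spp: "S (int p) q 1 0 = Spp p (q + 1)"
  unfolding S_def Spp_def by (simp add: mult.commute)

lemma S_zero_one_zero_eq_zeta_nat: "S 0 q 1 0 = zeta_nat q"
  unfolding S_def zeta_nat_def by (simp del: of_nat_Suc)

lemma T_pos_pos:
  assumes "p1 \<ge> 1" "p2 \<ge> 1" "m \<ge> 1" "r \<ge> 1"
  shows "T (int p1) (int p2) m 1 r =
        (\<Sum>i=2..m. (-1) ^ (m - i) / real r ^ (m - i + 1) * Sppp p1 p2 i)
      + (-1) ^ (m - 1) / real r ^ m * (Spp p1 (p2 + 1) + Spp p2 (p1 + 1))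
      - (-1) ^ (m - 1) / real r ^ m * zeta_nat (p1 + p2 + 1)
      + (-1) ^ (m - 1) / real r ^ m * (\<Sum>b=1..r-1. S (int p1) p2 1 b)
      + (-1) ^ (m - 1) / real r ^ m *
          ((\<Sum>b=1..r-1. S (int p2) p1 1 b) - (\<Sum>b=1..r-1. S 0 (p1 + p2 + 1) 1 b))"
proof -
  define a where "a n = harm (int p1) (Suc n) * harm (int p2) (Suc n)" for n
  define c where "c i = (-1) ^ (m - i) / real r ^ (m - i + 1)" for i
  define d where "d = (-1) ^ (m - 1) / real r ^ m"
  define F where "F k = S (int p1) p2 1 k + S (int p2) p1 1 k - S 0 (p1 + p2 + 1) 1 k" for k
  have expand: "a n / (real (Suc n) ^ m * real (Suc n + r) ^ 1) =
      (\<Sum>i=2..m. c i * (a n / real (Suc n) ^ i)) +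
      d * (\<Sum>k<r. a n / (real (Suc n + k) * real (Suc n + k + 1)))" for n
  proof -
    have "a n / (real (Suc n) ^ m * real (Suc n + r) ^ 1) =
        a n * (1 / (real (Suc n) ^ m * (real (Suc n) + real r)))"
      by simp
    also have "\<dots> = a n * ((\<Sum>i=2..m. c i * (1 / real (Suc n) ^ i)) +
        d * (\<Sum>k<r. 1 / ((real (Suc n) + real k) * (real (Suc n) + real k + 1))))"
      unfolding c_def d_def using assms by (subst one_div_power_mult_add_consecutive) auto
    finally show ?thesis
      by (simp add: sum_distrib_left algebra_simps)
  qed
  have "(\<lambda>n. (\<Sum>i=2..m. c i * (a n / real (Suc n) ^ i)) +
      d * (\<Sum>k<r. a n / (real (Suc n + k) * real (Suc n + k + 1)))) sums
    ((\<Sum>i=2..m. c i * Sppp p1 p2 i) + d * (\<Sum>k<r. F k))"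
  proof (intro sums_add sums_sum sums_mult)
    show "(\<lambda>n. a n / real (Suc n) ^ i) sums Sppp p1 p2 i" if "i \<in> {2..m}" for i
      unfolding a_def Sppp_def using assms that
      by (intro summable_sums summable_harm_mult_harm_div) (auto intro: power_increasing)
    show "(\<lambda>n. a n / (real (Suc n + k) * real (Suc n + k + 1))) sums F k" for k
      unfolding a_def F_def using assms
      by (subst suminf_harm_mult_harm_div_consecutive[symmetric])
        (auto intro!: summable_sums summable_harm_mult_harm_div mult_mono simp: power2_eq_square)
  qed
  then have "T (int p1) (int p2) m 1 r = (\<Sum>i=2..m. c i * Sppp p1 p2 i) + d * (\<Sum>k<r. F k)"
    unfolding T_def a_def[symmetric] expand by (rule sums_unique[symmetric])
  also have "(\<Sum>k<r. F k) = F 0 + (\<Sum>b=1..r-1. F b)"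
  proof -
    have "{..<r} = insert 0 {1..r-1}"
      using assms(4) by auto
    then show ?thesis by simp
  qed
  also have "F 0 = Spp p1 (p2 + 1) + Spp p2 (p1 + 1) - zeta_nat (p1 + p2 + 1)"
    unfolding F_def S_one_zero_eq_Spp S_zero_one_zero_eq_zeta_nat ..
  also have "(\<Sum>b=1..r-1. F b) = (\<Sum>b=1..r-1. S (int p1) p2 1 b) +
      ((\<Sum>b=1..r-1. S (int p2) p1 1 b) - (\<Sum>b=1..r-1. S 0 (p1 + p2 + 1) 1 b))"
    unfolding F_def by (simp add: sum.distrib sum_subtractf)
  finally show ?thesis
    unfolding c_def[symmetric] d_def[symmetric] by (simp add: algebra_simps)
qed

theorem lemma8:
  shows
  "(\<forall>p1 p2 m r :: nat. p1 \<ge> 1 \<longrightarrow> p2 \<ge> 1 \<longrightarrow> m \<ge> 1 \<longrightarrow> r \<ge> 1 \<longrightarrow>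
      T (int p1) (int p2) m 1 r =
        (\<Sum>i=2..m. (-1) ^ (m - i) / real r ^ (m - i + 1) * Sppp p1 p2 i)
      + (-1) ^ (m - 1) / real r ^ m * (Spp p1 (p2 + 1) + Spp p2 (p1 + 1))
      - (-1) ^ (m - 1) / real r ^ m * zeta_nat (p1 + p2 + 1)
      + (-1) ^ (m - 1) / real r ^ m * (\<Sum>b=1..r-1. S (int p1) p2 1 b)
      + (-1) ^ (m - 1) / real r ^ m *
          ((\<Sum>b=1..r-1. S (int p2) p1 1 b) - (\<Sum>b=1..r-1. S 0 (p1 + p2 + 1) 1 b)))
 \<and> (\<forall>p1 p2 m r :: nat. p1 \<ge> 1 \<longrightarrow> m \<ge> 1 \<longrightarrow> r \<ge> 1 \<longrightarrow> m \<ge> p2 + 2 \<longrightarrow>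
      T (int p1) (- int p2) m 1 r =
        1 / real (p2 + 1) * (\<Sum>l=0..p2. real ((p2 + 1) choose l) * bernoulli_plus l *
                                          S (int p1) (m - p2 - 1 + l) 1 r))
 \<and> (\<forall>p1 p2 m r :: nat. m \<ge> 1 \<longrightarrow> r \<ge> 1 \<longrightarrow> m \<ge> p1 + p2 + 3 \<longrightarrow>
      T (- int p1) (- int p2) m 1 r =
        1 / (real (p1 + 1) * real (p2 + 1)) *
          (\<Sum>l1=0..p1. \<Sum>l2=0..p2. real ((p1 + 1) choose l1) * real ((p2 + 1) choose l2) *
               bernoulli_plus l1 * bernoulli_plus l2 *
               S 0 (m - p1 - p2 - 1 + l1 + l2) 1 r))"
  using T_pos_pos T_pos_neg T_neg_neg by blast

end
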